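(* Let $n>p=p_n$ and $r_n=(-\log(1-\frac pn))^{1/2}$. Assume $p/n\to y\in(0,1]$ and $t=t_n=O(1/r_n)$ as $n\to\infty$ ($t_n$ real). Then $$\log\Big[\frac{\Gamma(\frac n2+t)}{\Gamma(\frac n2)}\cdot\frac{\Gamma(\frac{n-p}2)}{\Gamma(\frac{n-p}2+t)}\Big]=r_n^2t+o(1)$$ as $n\to\infty$.
   Context: $\Gamma$ is the Gamma function. *)

theory Defs
  imports "HOL-Analysis.Analysis" "HOL-Library.Landau_Symbols"
begin

definition r_seq :: "(nat \<Rightarrow> nat) \<Rightarrow> nat \<Rightarrow> real" where
  "r_seq p n = sqrt (- ln (1 - real (p n) / real n))"

end

(*
  With x = n/2 and a = (n-p)/2 we have r_n^2 = ln x - ln a, so the claim says that the errors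
  ln Gamma(z+t) - ln Gamma z - t ln z at z = x and at z = a both vanish in the limit.  By the
  mean value theorem and ln z - 1/z <= psi z <= ln z, each error is O(|t| (1+|t|) / z) as long
  as |t| <= z/2, so it suffices that t is bounded and t/(n-p) -> 0.  Boundedness holds because
  p/n -> y > 0 keeps r_n away from 0.  For t/(n-p): either n - p >= sqrt n, and boundedness of t
  suffices, or r_n^2 = ln (n/(n-p)) >= (ln n)/2, and then t = O(1/r_n) is already O(1/sqrt(ln n)).
*)
theory Submission
  imports Defs "HOL-Real_Asymp.Real_Asymp"
begin

lemma ln_diff_bounds:
  fixes u v :: real assumes "0 < u" "u \<le> v"
  shows "(v - u) / v \<le> ln v - ln u" "ln v - ln u \<le> (v - u) / u"
proof -
  have "ln (v/u) \<le> v/u - 1" using assms by (intro ln_le_minus_one) auto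
  then show "ln v - ln u \<le> (v - u) / u" using assms by (simp add: ln_div field_simps)
  have "ln (u/v) \<le> u/v - 1" using assms by (intro ln_le_minus_one) auto
  then show "(v - u) / v \<le> ln v - ln u" using assms by (simp add: ln_div field_simps)
qed

lemma abs_ln_diff_le:
  fixes u v :: real assumes "0 < u" "0 < v"
  shows "\<bar>ln u - ln v\<bar> \<le> \<bar>u - v\<bar> / min u v"
  using ln_diff_bounds(2)[of u v] ln_diff_bounds(2)[of v u] assms
  by (cases "u \<le> v") (auto simp: min_def)

lemma Digamma_real_bounds:
  fixes x :: real assumes x: "x > 0"
  shows "ln x - 1/x \<le> Digamma x" "Digamma x \<le> ln x"
proof -
  \<comment> \<open>Compare the partial sums of the series for psi with the telescoping sum for ln (x + m) - ln x.\<close>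
  define S where "S m = (\<Sum>k<m. inverse (x + real k))" for m
  have lim: "(\<lambda>m. ln (real m) - S m) \<longlonglongrightarrow> Digamma x"
    using Digamma_LIMSEQ[of x] x by (simp add: S_def)
  have telescope: "ln (x + real m) - ln x = (\<Sum>k<m. ln (x + real k + 1) - ln (x + real k))" for m
    using sum_lessThan_telescope[of "\<lambda>k. ln (x + real k)" m] by (simp add: add_ac)
  have step: "1 / (x + real k + 1) \<le> ln (x + real k + 1) - ln (x + real k)"
    "ln (x + real k + 1) - ln (x + real k) \<le> 1 / (x + real k)" for k
    using ln_diff_bounds[of "x + real k" "x + real k + 1"] x by auto
  have lo: "ln (x + real m) - ln x \<le> S m" for m
    unfolding telescope S_def by (intro sum_mono) (simp add: step(2) inverse_eq_divide)
  have hi: "S m \<le> 1/x + (ln (x + real m) - ln x)" for m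
  proof -
    have "S m \<le> (\<Sum>k<Suc m. inverse (x + real k))" unfolding S_def
      by (intro sum_mono2) (use x in auto)
    also have "\<dots> = 1/x + (\<Sum>k<m. 1 / (x + real k + 1))"
      by (subst sum.lessThan_Suc_shift) (simp add: add_ac inverse_eq_divide)
    also have "(\<Sum>k<m. 1 / (x + real k + 1)) \<le> ln (x + real m) - ln x"
      unfolding telescope by (intro sum_mono step(1))
    finally show ?thesis by simp
  qed
  have l0: "(\<lambda>m. c + (ln (real m) - ln (x + real m))) \<longlonglongrightarrow> c" for c
    using x by real_asymp
  show "Digamma x \<le> ln x"
    by (intro LIMSEQ_le[OF lim l0]) (use lo in \<open>auto intro!: exI[of _ 0] simp: algebra_simps\<close>)
  show "ln x - 1/x \<le> Digamma x"
    by (intro LIMSEQ_le[OF l0 lim]) (use hi in \<open>auto intro!: exI[of _ 0] simp: algebra_simps\<close>)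
qed

lemma ln_Gamma_real_MVT:
  fixes z t :: real assumes "z > 0" "z + t > 0"
  obtains \<xi> where "min z (z+t) \<le> \<xi>" "\<xi> \<le> max z (z+t)" "ln_Gamma (z+t) - ln_Gamma z = t * Digamma \<xi>"
proof -
  have MVT: "\<exists>\<xi>. a < \<xi> \<and> \<xi> < b \<and> ln_Gamma b - ln_Gamma a = (b - a) * Digamma \<xi>"
    if "0 < a" "a < b" for a b :: real
    by (rule MVT2) (use that in \<open>auto intro!: derivative_intros\<close>)
  consider "t = 0" | "t > 0" | "t < 0" by linarith
  then show ?thesis
  proof cases
    case 1 then show ?thesis using that[of z] by simp
  next
    case 2
    then obtain \<xi> where "z < \<xi>" "\<xi> < z + t" "ln_Gamma (z+t) - ln_Gamma z = t * Digamma \<xi>"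
      using MVT[of z "z+t"] assms by auto
    then show ?thesis using 2 that[of \<xi>] by simp
  next
    case 3
    then obtain \<xi> where "z + t < \<xi>" "\<xi> < z" "ln_Gamma z - ln_Gamma (z+t) = - t * Digamma \<xi>"
      using MVT[of "z+t" z] assms by auto
    then show ?thesis using 3 that[of \<xi>] by (simp add: algebra_simps)
  qed
qed

lemma ln_Gamma_shift_approx:
  fixes z t :: real assumes z: "z > 0" and zt: "z + t > 0"
  shows "\<bar>ln_Gamma (z+t) - ln_Gamma z - t * ln z\<bar> \<le> \<bar>t\<bar> * (1 + \<bar>t\<bar>) / min z (z+t)"
proof -
  define m where "m = min z (z+t)"
  have m: "m > 0" using z zt by (simp add: m_def)
  obtain \<xi> where \<xi>: "m \<le> \<xi>" "\<xi> \<le> max z (z+t)"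
    and eq: "ln_Gamma (z+t) - ln_Gamma z = t * Digamma \<xi>"
    using ln_Gamma_real_MVT[OF z zt] unfolding m_def by blast
  have \<xi>_pos: "\<xi> > 0" using \<xi> m by linarith
  have "\<bar>Digamma \<xi> - ln \<xi>\<bar> \<le> 1/\<xi>" using Digamma_real_bounds[OF \<xi>_pos] by linarith
  also have "\<dots> \<le> 1/m" using \<xi> m by (intro divide_left_mono) auto
  finally have Digamma_close: "\<bar>Digamma \<xi> - ln \<xi>\<bar> \<le> 1/m" .
  have "\<bar>ln \<xi> - ln z\<bar> \<le> \<bar>\<xi> - z\<bar> / min \<xi> z" by (rule abs_ln_diff_le[OF \<xi>_pos z])
  also have "\<dots> \<le> \<bar>t\<bar> / m"
    using \<xi> m z unfolding m_def by (intro frac_le) (auto simp: max_def min_def split: if_splits)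
  finally have ln_close: "\<bar>ln \<xi> - ln z\<bar> \<le> \<bar>t\<bar> / m" .
  have "\<bar>ln_Gamma (z+t) - ln_Gamma z - t * ln z\<bar> = \<bar>t\<bar> * \<bar>Digamma \<xi> - ln z\<bar>"
    using eq by (simp add: abs_mult flip: right_diff_distrib)
  also have "\<dots> \<le> \<bar>t\<bar> * (1/m + \<bar>t\<bar>/m)"
    using Digamma_close ln_close by (intro mult_left_mono) auto
  also have "\<dots> = \<bar>t\<bar> * (1 + \<bar>t\<bar>) / m" by (simp add: add_divide_distrib ring_distribs)
  finally show ?thesis unfolding m_def .
qed

lemma ln_Gamma_ratio_approx:
  fixes x a t :: real assumes a: "0 < a" "a \<le> x" and t: "\<bar>t\<bar> \<le> a/2"
  shows "\<bar>ln (Gamma (x+t) / Gamma x * (Gamma a / Gamma (a+t))) - (ln x - ln a) * t\<bar>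
           \<le> 4 * \<bar>t\<bar> * (1 + \<bar>t\<bar>) / a"
proof -
  define g where "g z = ln_Gamma (z+t) - ln_Gamma z - t * ln z" for z
  have g_bound: "\<bar>g z\<bar> \<le> 2 * \<bar>t\<bar> * (1 + \<bar>t\<bar>) / a" if "a \<le> z" for z
  proof -
    have "\<bar>g z\<bar> \<le> \<bar>t\<bar> * (1 + \<bar>t\<bar>) / min z (z+t)"
      unfolding g_def using that a t by (intro ln_Gamma_shift_approx) auto
    also have "\<dots> \<le> \<bar>t\<bar> * (1 + \<bar>t\<bar>) / (a/2)"
      using that a t by (intro divide_left_mono) auto
    also have "\<dots> = 2 * \<bar>t\<bar> * (1 + \<bar>t\<bar>) / a" by simp
    finally show ?thesis .
  qed
  have "ln (Gamma (x+t) / Gamma x * (Gamma a / Gamma (a+t))) =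
        (ln_Gamma (x+t) - ln_Gamma x) - (ln_Gamma (a+t) - ln_Gamma a)"
    using a t by (simp add: Gamma_real_pos_exp ln_mult ln_div)
  then have "ln (Gamma (x+t) / Gamma x * (Gamma a / Gamma (a+t))) - (ln x - ln a) * t = g x - g a"
    unfolding g_def by (simp add: algebra_simps)
  then show ?thesis using g_bound[OF a(2)] g_bound[of a] by linarith
qed

lemma r_seq_square:
  assumes "p n < n"
  shows "(r_seq p n)^2 = ln (real n) - ln (real (n - p n))"
proof -
  have "1 - real (p n) / real n = real (n - p n) / real n"
    using assms by (simp add: of_nat_diff field_simps)
  moreover have "ln (real (n - p n) / real n) \<le> 0"
    using assms by (subst ln_le_zero_iff) auto
  ultimately show ?thesis using assms by (simp add: r_seq_def ln_div)
qed

lemma r_seq_eventually_ge: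
  assumes "eventually (\<lambda>n. p n < n) sequentially" and "0 < y" "y \<le> 1"
    and "(\<lambda>n. real (p n) / real n) \<longlonglongrightarrow> y"
  obtains c where "c > 0" "eventually (\<lambda>n. c \<le> r_seq p n) sequentially"
proof
  show "sqrt (- ln (1 - y/2)) > 0" using assms(2,3) by (simp add: ln_less_zero_iff)
  have "eventually (\<lambda>n. y/2 < real (p n) / real n) sequentially"
    using order_tendstoD(1)[OF assms(4), of "y/2"] assms(2) by simp
  then show "eventually (\<lambda>n. sqrt (- ln (1 - y/2)) \<le> r_seq p n) sequentially"
    using assms(1)
  proof eventually_elim
    case (elim n)
    then have "0 < 1 - real (p n) / real n" by (simp add: field_simps)
    then have "ln (1 - real (p n) / real n) \<le> ln (1 - y/2)"
      using elim(1) assms(3) by (subst ln_le_cancel_iff) auto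
    then show ?case by (simp add: r_seq_def)
  qed
qed

lemma shift_over_gap_le:
  fixes x m t T K :: real
  assumes x: "2 \<le> x" and m: "1 \<le> m" "m \<le> x"
    and T: "\<bar>t\<bar> \<le> T" and K: "\<bar>t\<bar> * sqrt (ln x - ln m) \<le> K"
  shows "\<bar>t\<bar> / m \<le> T / sqrt x + K / sqrt (ln x / 2)"
proof -
  have ln_x: "ln x > 0" using x by simp
  have "0 \<le> \<bar>t\<bar> * sqrt (ln x - ln m)" using m by simp
  then have T_term: "0 \<le> T / sqrt x" and K_term: "0 \<le> K / sqrt (ln x / 2)"
    using T K ln_x x by auto
  show ?thesis
  proof (cases "ln x - ln m \<le> ln x / 2")
    case True
    then have "ln (sqrt x) \<le> ln m" using x by (simp add: ln_sqrt)
    then have "sqrt x \<le> m" using x m by simp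
    then have "\<bar>t\<bar> / m \<le> T / sqrt x" using T x by (intro frac_le) auto
    then show ?thesis using K_term by linarith
  next
    case False
    then have "\<bar>t\<bar> * sqrt (ln x / 2) \<le> K"
      using order.trans[OF mult_left_mono K] by (simp add: real_sqrt_le_mono)
    then have "\<bar>t\<bar> \<le> K / sqrt (ln x / 2)" using ln_x by (simp add: field_simps)
    moreover have "\<bar>t\<bar> / m \<le> \<bar>t\<bar>" using m by (simp add: divide_le_eq mult_le_cancel_left1)
    ultimately show ?thesis using T_term by linarith
  qed
qed

lemma shift_over_gap_tendsto_zero:
  assumes "eventually (\<lambda>n. p n < n \<and> \<bar>t n\<bar> \<le> T \<and> \<bar>t n\<bar> * r_seq p n \<le> K) sequentially"
  shows "(\<lambda>n. \<bar>t n\<bar> / real (n - p n)) \<longlonglongrightarrow> 0"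
proof (rule Lim_null_comparison)
  show "(\<lambda>n. T / sqrt (real n) + K / sqrt (ln (real n) / 2)) \<longlonglongrightarrow> 0"
    by real_asymp
  show "eventually (\<lambda>n. norm (\<bar>t n\<bar> / real (n - p n)) \<le> T / sqrt (real n) + K / sqrt (ln (real n) / 2))
          sequentially"
    using assms eventually_ge_at_top[of 2]
  proof eventually_elim
    case (elim n)
    then have "\<bar>t n\<bar> * sqrt (ln (real n) - ln (real (n - p n))) \<le> K"
      using r_seq_square[of p n] by (simp add: r_seq_def)
    then show ?case using elim by (simp add: shift_over_gap_le)
  qed
qed

lemma Gamma_ratio_r_seq_error_le:
  assumes "p n < n" and "4 * \<bar>t\<bar> \<le> real (n - p n)" and "\<bar>t\<bar> \<le> T"
  shows "\<bar>ln ((Gamma (real n / 2 + t) / Gamma (real n / 2)) *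
                (Gamma (real (n - p n) / 2) / Gamma (real (n - p n) / 2 + t)))
            - (r_seq p n)^2 * t\<bar> \<le> 8 * (1 + T) * (\<bar>t\<bar> / real (n - p n))"
proof -
  have r_square: "(r_seq p n)^2 = ln (real n / 2) - ln (real (n - p n) / 2)"
    using assms(1) by (simp add: r_seq_square ln_div)
  have "\<bar>ln ((Gamma (real n / 2 + t) / Gamma (real n / 2)) *
                (Gamma (real (n - p n) / 2) / Gamma (real (n - p n) / 2 + t)))
            - (ln (real n / 2) - ln (real (n - p n) / 2)) * t\<bar>
          \<le> 4 * \<bar>t\<bar> * (1 + \<bar>t\<bar>) / (real (n - p n) / 2)"
    using assms by (intro ln_Gamma_ratio_approx) auto
  also have "\<dots> = 8 * (1 + \<bar>t\<bar>) * (\<bar>t\<bar> / real (n - p n))"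
    by (simp add: field_simps)
  also have "\<dots> \<le> 8 * (1 + T) * (\<bar>t\<bar> / real (n - p n))"
    using assms(3) by (intro mult_right_mono) auto
  finally show ?thesis unfolding r_square .
qed

lemma bigO_inverse_eventually_bounds:
  fixes r t :: "nat \<Rightarrow> real"
  assumes "c > 0" and "eventually (\<lambda>n. c \<le> r n) sequentially" and "t \<in> O(\<lambda>n. 1 / r n)"
  obtains K where "eventually (\<lambda>n. \<bar>t n\<bar> \<le> K / c \<and> \<bar>t n\<bar> * r n \<le> K) sequentially"
proof -
  obtain K where "eventually (\<lambda>n. \<bar>t n\<bar> \<le> K * \<bar>1 / r n\<bar>) sequentially"
    using assms(3) by (elim landau_o.bigE) auto
  then have "eventually (\<lambda>n. \<bar>t n\<bar> \<le> K / c \<and> \<bar>t n\<bar> * r n \<le> K) sequentially"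
    using assms(2)
  proof eventually_elim
    case (elim n)
    then have "\<bar>t n\<bar> * r n \<le> K" using assms(1) by (simp add: field_simps)
    moreover from this have "\<bar>t n\<bar> * c \<le> K"
      using elim(2) order.trans[OF mult_left_mono] by fastforce
    ultimately show ?case using assms(1) by (simp add: field_simps)
  qed
  then show ?thesis using that by blast
qed

theorem lemma3:
  fixes p :: "nat \<Rightarrow> nat" and t :: "nat \<Rightarrow> real" and y :: real
  assumes "eventually (\<lambda>n. p n < n) sequentially"
    and "0 < y" and "y \<le> 1"
    and "(\<lambda>n. real (p n) / real n) \<longlonglongrightarrow> y"
    and "t \<in> O(\<lambda>n. 1 / r_seq p n)"
  shows "(\<lambda>n. ln ((Gamma (real n / 2 + t n) / Gamma (real n / 2)) *
                  (Gamma (real (n - p n) / 2) / Gamma (real (n - p n) / 2 + t n)))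
              - (r_seq p n)^2 * t n) \<longlonglongrightarrow> 0"
proof -
  obtain c where c: "c > 0" "eventually (\<lambda>n. c \<le> r_seq p n) sequentially"
    using r_seq_eventually_ge assms(1-4) by blast
  then obtain K where "eventually (\<lambda>n. \<bar>t n\<bar> \<le> K / c \<and> \<bar>t n\<bar> * r_seq p n \<le> K) sequentially"
    using bigO_inverse_eventually_bounds assms(5) by blast
  then have bounds: "eventually (\<lambda>n. p n < n \<and> \<bar>t n\<bar> \<le> K / c \<and> \<bar>t n\<bar> * r_seq p n \<le> K) sequentially"
    using assms(1) by eventually_elim blast
  then have gap: "(\<lambda>n. \<bar>t n\<bar> / real (n - p n)) \<longlonglongrightarrow> 0"
    by (rule shift_over_gap_tendsto_zero)
  then have "(\<lambda>n. 8 * (1 + K / c) * (\<bar>t n\<bar> / real (n - p n))) \<longlonglongrightarrow> 0"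
    using tendsto_mult_right_zero by blast
  moreover have "eventually (\<lambda>n. \<bar>t n\<bar> / real (n - p n) < 1/4) sequentially"
    using gap by (rule order_tendstoD(2)) simp
  then have "eventually (\<lambda>n. norm (ln ((Gamma (real n / 2 + t n) / Gamma (real n / 2)) *
                  (Gamma (real (n - p n) / 2) / Gamma (real (n - p n) / 2 + t n)))
              - (r_seq p n)^2 * t n) \<le> 8 * (1 + K / c) * (\<bar>t n\<bar> / real (n - p n))) sequentially"
    using bounds
    by eventually_elim (unfold real_norm_def, rule Gamma_ratio_r_seq_error_le, auto simp: field_simps)
  ultimately show ?thesis by (rule Lim_null_comparison[rotated])
qed

end
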